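(* Let $f(r)=r$, let $q_0\in\mathbb R^3\setminus\Sigma$, and let $\gamma$ be an arc-length parametrized normal trajectory from $q_0$ with initial covector $\lambda_0=(u_0,v_0,w_0)\in E_1$. Then $$t_{\mathrm{con}}(\gamma)=\frac{\pi}{|w_0|},$$ with the convention $t_{\mathrm{con}}(\gamma)=+\infty$ when $w_0=0$ (the straight-line geodesics).
   Context: Consider $\mathbb R^3$ with points $q=(x,y,z)$, $r=\sqrt{x^2+y^2}$, $\Sigma=\{r=0\}$, and $f(r)=r$. Let $q_0=(x_0,y_0,z_0)$ and $r_0=\sqrt{x_0^2+y_0^2}$. Normal trajectories are projections of solutions of $$\dot x=u,\quad \dot y=v,\quad \dot z=r^2w,\quad \dot u=-w^2x,\quad \dot v=-w^2y,\quad \dot w=0,$$ with initial covector $\lambda_0=(u_0,v_0,w_0)$. The unit energy shell is $E_1=\{\lambda_0:u_0^2+v_0^2+r_0^2w_0^2=1\}$. Exponential map and conjugate time: - $\mathrm{Exp}_{q_0}(\lambda_0)=\gamma(1;\lambda_0)$. - $t_{\mathrm{con}}(\gamma)=\inf\{t>0:\mathrm{Exp}_{q_0}\text{ has a critical point at }t\lambda_0\}$. *)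

theory Defs
  imports "HOL-Analysis.Analysis" "HOL-Library.Extended_Real"
begin

text \<open>The normal (Hamiltonian) system for f(r) = r, i.e. z' = r^2 w with r^2 = x^2 + y^2,
  with initial point q0 and initial covector l0, solved by six real functions of t.\<close>

definition normal_sys ::
  "real \<times> real \<times> real \<Rightarrow> real \<times> real \<times> real \<Rightarrow>
   (real \<Rightarrow> real) \<Rightarrow> (real \<Rightarrow> real) \<Rightarrow> (real \<Rightarrow> real) \<Rightarrow>
   (real \<Rightarrow> real) \<Rightarrow> (real \<Rightarrow> real) \<Rightarrow> (real \<Rightarrow> real) \<Rightarrow> bool" where
  "normal_sys q0 l0 X Y Z U V W \<longleftrightarrow>
     (X 0, Y 0, Z 0) = q0 \<and> (U 0, V 0, W 0) = l0 \<and>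
     (\<forall>t. (X has_real_derivative U t) (at t) \<and>
          (Y has_real_derivative V t) (at t) \<and>
          (Z has_real_derivative ((X t)\<^sup>2 + (Y t)\<^sup>2) * W t) (at t) \<and>
          (U has_real_derivative - ((W t)\<^sup>2 * X t)) (at t) \<and>
          (V has_real_derivative - ((W t)\<^sup>2 * Y t)) (at t) \<and>
          (W has_real_derivative 0) (at t))"

text \<open>The normal trajectory gamma(t; l0) from q0: projection of the (unique, global) solution.\<close>
definition normal_traj :: "real \<times> real \<times> real \<Rightarrow> real \<times> real \<times> real \<Rightarrow> real \<Rightarrow> real \<times> real \<times> real" where
  "normal_traj q0 l0 = (THE \<gamma>. \<exists>X Y Z U V W. normal_sys q0 l0 X Y Z U V W \<and>
                                 \<gamma> = (\<lambda>t. (X t, Y t, Z t)))"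

definition Exp_map :: "real \<times> real \<times> real \<Rightarrow> real \<times> real \<times> real \<Rightarrow> real \<times> real \<times> real" where
  "Exp_map q0 l0 = normal_traj q0 l0 1"

definition critical_point :: "('a::real_normed_vector \<Rightarrow> 'b::real_normed_vector) \<Rightarrow> 'a \<Rightarrow> bool" where
  "critical_point F p \<longleftrightarrow> (\<exists>D. (F has_derivative D) (at p) \<and> \<not> surj D)"

text \<open>Conjugate time as an extended real; the infimum of the empty set is +infinity.\<close>
definition t_con :: "real \<times> real \<times> real \<Rightarrow> real \<times> real \<times> real \<Rightarrow> ereal" where
  "t_con q0 l0 = Inf (ereal ` {t. t > 0 \<and> critical_point (Exp_map q0) (t *\<^sub>R l0)})"

end

theory Submission
  imports Defs "HOL-Real_Asymp.Real_Asymp"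
begin

text \<open>The normal system decouples: (x, u) and (y, v) are harmonic oscillators of frequency w,
  and z is then found by integration, so Exp_{q0}(u, v, w) is explicit. The first two columns of
  its Jacobian are (s, 0, _) and (0, s, _) with s = sin w / w, and its determinant equals
  s (s a + s b + r c), where a = x0^2 + y0^2 > 0, b = x0 u + y0 v, c = u^2 + v^2 and
  r = (sin w - w cos w) / w^3 (at w = 0: s = 1, r = 1/3). For |w| < pi one has 0 < s < 4 r,
  which together with b^2 \<le> a c makes the second factor positive. At |w| = pi the factor s
  vanishes and the horizontal part of the differential degenerates. Along the ray t (u0, v0, w0)
  the frequency is t w0, so the first conjugate time is pi / |w0|.\<close>

lemma has_derivative_component_directional:
  fixes F :: "'a::real_normed_vector \<Rightarrow> 'b::real_normed_vector"
  assumes F: "(F has_derivative D) (at p)" and g: "bounded_linear g"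
    and "((\<lambda>h. g (F (p + h *\<^sub>R e))) has_real_derivative c) (at 0)"
  shows "g (D e) = c"
proof -
  have line: "((\<lambda>h::real. p + h *\<^sub>R e) has_derivative (\<lambda>h. h *\<^sub>R e)) (at 0)"
    by (auto intro!: derivative_eq_intros)
  have "((\<lambda>h. F (p + h *\<^sub>R e)) has_derivative (\<lambda>h. D (h *\<^sub>R e))) (at 0)"
    using diff_chain_at[OF line, of F D] F by (simp add: o_def)
  then have "((\<lambda>h. g (F (p + h *\<^sub>R e))) has_derivative (\<lambda>h. g (D (h *\<^sub>R e)))) (at 0)"
    by (rule bounded_linear.has_derivative[OF g])
  then have "((\<lambda>h. g (F (p + h *\<^sub>R e))) has_derivative (\<lambda>h. h * g (D e))) (at 0)"
    using linear_scale[OF has_derivative_linear[OF F]] linear_scale[OF bounded_linear.linear[OF g]]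
    by simp
  then have "((\<lambda>h. g (F (p + h *\<^sub>R e))) has_real_derivative g (D e)) (at 0)"
    by (simp add: has_field_derivative_def mult.commute[of _ "g (D e)"])
  then show ?thesis
    using assms(3) by (rule DERIV_unique)
qed

lemma has_derivative_directional_triple:
  fixes F :: "'a::real_normed_vector \<Rightarrow> real \<times> real \<times> real"
  assumes "(F has_derivative D) (at p)"
    and "((\<lambda>h. fst (F (p + h *\<^sub>R e))) has_real_derivative a) (at 0)"
    and "((\<lambda>h. fst (snd (F (p + h *\<^sub>R e)))) has_real_derivative b) (at 0)"
    and "((\<lambda>h. snd (snd (F (p + h *\<^sub>R e)))) has_real_derivative c) (at 0)"
  shows "D e = (a, b, c)"
  using has_derivative_component_directional[OF assms(1) _ assms(2)]
    has_derivative_component_directional[OF assms(1) _ assms(3)]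
    has_derivative_component_directional[OF assms(1) _ assms(4)]
  by (simp add: prod_eq_iff bounded_linear_fst bounded_linear_snd bounded_linear_compose)

lemma linear_triple_expand:
  fixes D :: "real \<times> real \<times> real \<Rightarrow> 'a::real_vector"
  assumes "linear D"
  shows "D (a, b, c) = a *\<^sub>R D (1, 0, 0) + b *\<^sub>R D (0, 1, 0) + c *\<^sub>R D (0, 0, 1)"
proof -
  have "(a, b, c) = a *\<^sub>R (1, 0, 0) + b *\<^sub>R (0, 1, 0) + c *\<^sub>R ((0, 0, 1) :: real \<times> real \<times> real)"
    by simp
  then show ?thesis
    by (simp only: linear_add[OF assms] linear_scale[OF assms])
qed

text \<open>The determinant of D is s (s zw - a zu - b zv).\<close>

lemma surj_linear_triple:
  fixes D :: "real \<times> real \<times> real \<Rightarrow> real \<times> real \<times> real"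
  assumes "linear D"
    and "D (1, 0, 0) = (s, 0, zu)" "D (0, 1, 0) = (0, s, zv)" "D (0, 0, 1) = (a, b, zw)"
    and "s \<noteq> 0" "s * zw - a * zu - b * zv \<noteq> 0"
  shows "surj D"
proof -
  have "(p, q, r) \<in> range D" for p q r
  proof -
    define c where "c = (s * r - p * zu - q * zv) / (s * zw - a * zu - b * zv)"
    have c: "c * (s * zw - a * zu - b * zv) = s * r - p * zu - q * zv"
      using assms(6) by (simp add: c_def)
    have "(p - c * a) / s * zu + (q - c * b) / s * zv + c * zw
        = (p * zu + q * zv + c * (s * zw - a * zu - b * zv)) / s"
      using assms(5) by (simp add: field_simps)
    also have "\<dots> = r"
      using assms(5) c by simp
    finally have "(p - c * a) / s * zu + (q - c * b) / s * zv + c * zw = r" .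
    then have "D ((p - c * a) / s, (q - c * b) / s, c) = (p, q, r)"
      using assms(2-5) linear_triple_expand[OF assms(1), of "(p - c * a) / s" "(q - c * b) / s" c]
      by simp
    then show ?thesis
      by (metis rangeI)
  qed
  then show ?thesis
    by (metis UNIV_eq_I prod_cases3)
qed

lemma not_surj_linear_triple:
  fixes D :: "real \<times> real \<times> real \<Rightarrow> real \<times> real \<times> real"
  assumes "linear D" "D (1, 0, 0) = (0, 0, zu)" "D (0, 1, 0) = (0, 0, zv)"
  shows "\<not> surj D"
proof
  assume "surj D"
  then obtain h1 h2 h3 k1 k2 k3 where "D (h1, h2, h3) = (1, 0, 0)" "D (k1, k2, k3) = (0, 1, 0)"
    by (metis surjD prod_cases3)
  moreover obtain a b c where "D (0, 0, 1) = (a, b, c)"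
    by (cases "D (0, 0, 1)")
  ultimately have "h3 * a = 1" "h3 * b = 0" "k3 * a = 0" "k3 * b = 1"
    using assms linear_triple_expand[OF assms(1), of h1 h2 h3]
      linear_triple_expand[OF assms(1), of k1 k2 k3] by simp_all
  then show False
    by (metis mult_eq_0_iff zero_neq_one)
qed

lemma sin_minus_mult_cos_pos:
  fixes x :: real
  assumes "0 < x" "x < pi"
  shows "x * cos x < sin x"
proof -
  have "(\<lambda>y. sin y - y * cos y) 0 < (\<lambda>y. sin y - y * cos y) x"
  proof (rule DERIV_pos_imp_increasing_open[OF assms(1)])
    fix y assume "0 < y" "y < x"
    then have "((\<lambda>y. sin y - y * cos y) has_real_derivative y * sin y) (at y) \<and> 0 < y * sin y"
      using assms by (auto intro!: derivative_eq_intros mult_pos_pos sin_gt_zero)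
    then show "\<exists>d. ((\<lambda>y. sin y - y * cos y) has_real_derivative d) (at y) \<and> 0 < d" ..
  qed (intro continuous_intros)
  then show ?thesis by simp
qed

lemma sin_lt_four_sin_minus_mult_cos:
  fixes x :: real
  assumes "0 < x" "x < pi"
  shows "x\<^sup>2 * sin x < 4 * (sin x - x * cos x)"
proof -
  let ?f = "\<lambda>y. 4 * (sin y - y * cos y) - y\<^sup>2 * sin y"
  have "?f 0 < ?f x"
  proof (rule DERIV_pos_imp_increasing_open[OF assms(1)])
    fix y assume y: "0 < y" "y < x"
    have "(?f has_real_derivative y * (sin y + (sin y - y * cos y))) (at y)"
      by (auto intro!: derivative_eq_intros simp: algebra_simps power2_eq_square)
    moreover have "0 < y * (sin y + (sin y - y * cos y))"
      using y assms sin_minus_mult_cos_pos[of y] sin_gt_zero[of y] by simp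
    ultimately show "\<exists>d. (?f has_real_derivative d) (at y) \<and> 0 < d" by blast
  qed (intro continuous_intros)
  then show ?thesis by simp
qed

lemma sinc_bounds:
  fixes w :: real
  assumes "w \<noteq> 0" "\<bar>w\<bar> < pi"
  shows "0 < sin w / w" "sin w / w < 4 * ((sin w - w * cos w) / w ^ 3)"
proof -
  have even: "sin w / w = sin \<bar>w\<bar> / \<bar>w\<bar>"
    "(sin w - w * cos w) / w ^ 3 = (sin \<bar>w\<bar> - \<bar>w\<bar> * cos \<bar>w\<bar>) / \<bar>w\<bar> ^ 3"
    by (cases "w < 0"; simp add: field_simps)+
  have w: "0 < \<bar>w\<bar>" "\<bar>w\<bar> < pi"
    using assms by auto
  show "0 < sin w / w"
    unfolding even using w by (simp add: sin_gt_zero)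
  have "sin x / x < 4 * ((sin x - x * cos x) / x ^ 3)" if "0 < x" "x < pi" for x
    using sin_lt_four_sin_minus_mult_cos[OF that] that
    by (simp add: field_simps power2_eq_square power3_eq_cube)
  then show "sin w / w < 4 * ((sin w - w * cos w) / w ^ 3)"
    unfolding even using w by blast
qed

lemma quadratic_form_pos:
  fixes a b c s r :: real
  assumes "0 < a" "0 \<le> c" "b\<^sup>2 \<le> a * c" "0 < s" "s < 4 * r"
  shows "0 < s * a + s * b + r * c"
proof (cases "c = 0")
  case True
  then show ?thesis
    using assms by simp
next
  case False
  then have "0 < c" "0 < r"
    using assms by auto
  then have pos: "0 < s * a + r * c"
    using assms by (simp add: add_pos_pos)
  have "s\<^sup>2 * b\<^sup>2 \<le> s\<^sup>2 * (a * c)"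
    using assms(3) by (simp add: mult_left_mono)
  also have "\<dots> < 4 * (s * a) * (r * c)"
    using assms \<open>0 < c\<close> by (simp add: power2_eq_square)
  also have "\<dots> \<le> (s * a + r * c)\<^sup>2"
    using sum_squares_ge_zero[of "s * a - r * c" 0] by (simp add: power2_eq_square algebra_simps)
  finally have "\<bar>s * b\<bar> < s * a + r * c"
    using pos by (simp add: power_mult_distrib power2_less_imp_less)
  then show ?thesis
    by linarith
qed

definition planar_pos :: "real \<Rightarrow> real \<Rightarrow> real \<Rightarrow> real \<Rightarrow> real" where
  "planar_pos x0 u w t = (if w = 0 then x0 + u * t else x0 * cos (w * t) + u * sin (w * t) / w)"

definition planar_vel :: "real \<Rightarrow> real \<Rightarrow> real \<Rightarrow> real \<Rightarrow> real" where
  "planar_vel x0 u w t = (if w = 0 then u else u * cos (w * t) - x0 * w * sin (w * t))"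

definition vertical_pos :: "real \<Rightarrow> real \<Rightarrow> real \<Rightarrow> real \<Rightarrow> real \<Rightarrow> real \<Rightarrow> real \<Rightarrow> real" where
  "vertical_pos x0 y0 z0 u v w t = (if w = 0 then z0 else z0
      + (x0\<^sup>2 + y0\<^sup>2) * (w * t + sin (w * t) * cos (w * t)) / 2
      + (x0 * u + y0 * v) * (sin (w * t))\<^sup>2 / w
      + (u\<^sup>2 + v\<^sup>2) * (w * t - sin (w * t) * cos (w * t)) / (2 * w\<^sup>2))"

lemma has_real_derivative_planar_pos: "(planar_pos x0 u w has_real_derivative planar_vel x0 u w t) (at t)"
  unfolding planar_pos_def planar_vel_def
  by (cases "w = 0") (auto intro!: derivative_eq_intros simp: field_simps)

lemma has_real_derivative_planar_vel:
  "(planar_vel x0 u w has_real_derivative - (w\<^sup>2 * planar_pos x0 u w t)) (at t)"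
  unfolding planar_pos_def planar_vel_def
  by (cases "w = 0") (auto intro!: derivative_eq_intros simp: field_simps power2_eq_square)

lemma has_real_derivative_vertical_pos:
  "(vertical_pos x0 y0 z0 u v w has_real_derivative
     ((planar_pos x0 u w t)\<^sup>2 + (planar_pos y0 v w t)\<^sup>2) * w) (at t)"
proof (cases "w = 0")
  case False
  define d where "d = (x0\<^sup>2 + y0\<^sup>2) * w * (1 + cos (w * t) * cos (w * t) - sin (w * t) * sin (w * t)) / 2
     + (x0 * u + y0 * v) * 2 * sin (w * t) * cos (w * t)
     + (u\<^sup>2 + v\<^sup>2) * (1 - cos (w * t) * cos (w * t) + sin (w * t) * sin (w * t)) / (2 * w)"
  have "(vertical_pos x0 y0 z0 u v w has_real_derivative d) (at t)"
    unfolding vertical_pos_def d_def using False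
    by (auto intro!: derivative_eq_intros simp: field_simps power2_eq_square)
  moreover have "d = ((planar_pos x0 u w t)\<^sup>2 + (planar_pos y0 v w t)\<^sup>2) * w"
    using False unfolding d_def planar_pos_def
    by (simp add: field_simps power2_eq_square) (use sin_cos_squared_add3[of "t * w"] in algebra)
  ultimately show ?thesis by simp
qed (unfold vertical_pos_def, auto intro!: derivative_eq_intros)

lemma planar_pos_0 [simp]: "planar_pos x0 u w 0 = x0"
  by (simp add: planar_pos_def)

lemma planar_vel_0 [simp]: "planar_vel x0 u w 0 = u"
  by (simp add: planar_vel_def)

lemma vertical_pos_0 [simp]: "vertical_pos x0 y0 z0 u v w 0 = z0"
  by (simp add: vertical_pos_def)

lemma harmonic_oscillator_unique:
  fixes X U X' U' :: "real \<Rightarrow> real"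
  assumes "\<And>t. (X has_real_derivative U t) (at t)"
    and "\<And>t. (U has_real_derivative - (w\<^sup>2 * X t)) (at t)"
    and "\<And>t. (X' has_real_derivative U' t) (at t)"
    and "\<And>t. (U' has_real_derivative - (w\<^sup>2 * X' t)) (at t)"
    and "X 0 = X' 0" "U 0 = U' 0"
  shows "X t = X' t"
proof -
  define E where "E s = w\<^sup>2 * (X s - X' s)\<^sup>2 + (U s - U' s)\<^sup>2" for s
  have "\<forall>s. (E has_real_derivative 0) (at s)"
    unfolding E_def [abs_def] by (auto intro!: derivative_eq_intros assms simp: algebra_simps)
  then have "E s = E 0" for s
    by (rule DERIV_isconst_all)
  then have "w\<^sup>2 * (X s - X' s)\<^sup>2 + (U s - U' s)\<^sup>2 = 0" for s
    using assms(5,6) by (simp add: E_def)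
  then have "U s = U' s" for s
    using add_nonneg_eq_0_iff[of "w\<^sup>2 * (X s - X' s)\<^sup>2" "(U s - U' s)\<^sup>2"] by simp
  then have "((\<lambda>s. X s - X' s) has_real_derivative 0) (at s)" for s
    using DERIV_diff[OF assms(1,3)] by fastforce
  then show ?thesis
    using DERIV_isconst_all[of "\<lambda>s. X s - X' s" t 0] assms(5) by simp
qed

lemma normal_sys_explicit:
  "normal_sys (x0, y0, z0) (u, v, w) (planar_pos x0 u w) (planar_pos y0 v w)
     (vertical_pos x0 y0 z0 u v w) (planar_vel x0 u w) (planar_vel y0 v w) (\<lambda>_. w)"
  unfolding normal_sys_def
  by (simp add: has_real_derivative_planar_pos has_real_derivative_planar_vel
      has_real_derivative_vertical_pos)

lemma normal_sys_unique:
  assumes "normal_sys (x0, y0, z0) (u, v, w) X Y Z U V W"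
  shows "X = planar_pos x0 u w" "Y = planar_pos y0 v w" "Z = vertical_pos x0 y0 z0 u v w"
proof -
  note sys = assms [unfolded normal_sys_def]
  have W: "W t = w" for t
    using DERIV_isconst_all[of W t 0] sys by auto
  have "X t = planar_pos x0 u w t" for t
    by (rule harmonic_oscillator_unique[where U = U and U' = "planar_vel x0 u w"])
      (use sys W in \<open>auto simp: has_real_derivative_planar_pos has_real_derivative_planar_vel\<close>)
  then show X: "X = planar_pos x0 u w" ..
  have "Y t = planar_pos y0 v w t" for t
    by (rule harmonic_oscillator_unique[where U = V and U' = "planar_vel y0 v w"])
      (use sys W in \<open>auto simp: has_real_derivative_planar_pos has_real_derivative_planar_vel\<close>)
  then show Y: "Y = planar_pos y0 v w" ..
  have Z': "(Z has_real_derivative ((planar_pos x0 u w s)\<^sup>2 + (planar_pos y0 v w s)\<^sup>2) * w) (at s)" for s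
    using sys W unfolding X Y by simp
  have "((\<lambda>s. Z s - vertical_pos x0 y0 z0 u v w s) has_real_derivative 0) (at s)" for s
    using DERIV_diff[OF Z' has_real_derivative_vertical_pos[of x0 y0 z0 u v w]] by simp
  then have "Z t = vertical_pos x0 y0 z0 u v w t" for t
    using DERIV_isconst_all[of "\<lambda>s. Z s - vertical_pos x0 y0 z0 u v w s" t 0] sys by simp
  then show "Z = vertical_pos x0 y0 z0 u v w" ..
qed

lemma normal_traj_explicit:
  "normal_traj (x0, y0, z0) (u, v, w) =
     (\<lambda>t. (planar_pos x0 u w t, planar_pos y0 v w t, vertical_pos x0 y0 z0 u v w t))"
  unfolding normal_traj_def
proof (rule the_equality)
  fix \<gamma>
  assume "\<exists>X Y Z U V W. normal_sys (x0, y0, z0) (u, v, w) X Y Z U V W \<and> \<gamma> = (\<lambda>t. (X t, Y t, Z t))"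
  then obtain X Y Z U V W where "normal_sys (x0, y0, z0) (u, v, w) X Y Z U V W" "\<gamma> = (\<lambda>t. (X t, Y t, Z t))"
    by blast
  then show "\<gamma> = (\<lambda>t. (planar_pos x0 u w t, planar_pos y0 v w t, vertical_pos x0 y0 z0 u v w t))"
    using normal_sys_unique by simp
qed (use normal_sys_explicit in blast)

lemma Exp_map_explicit:
  "Exp_map (x0, y0, z0) (u, v, w) =
     (planar_pos x0 u w 1, planar_pos y0 v w 1, vertical_pos x0 y0 z0 u v w 1)"
  by (simp add: Exp_map_def normal_traj_explicit)

definition Exp_closed_form :: "real \<Rightarrow> real \<Rightarrow> real \<Rightarrow> real \<times> real \<times> real \<Rightarrow> real \<times> real \<times> real" where
  "Exp_closed_form x0 y0 z0 p =
    (let u = fst p; v = fst (snd p); w = snd (snd p) in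
     (x0 * cos w + u * sin w / w,
      y0 * cos w + v * sin w / w,
      z0 + (x0\<^sup>2 + y0\<^sup>2) * (w + sin w * cos w) / 2 + (x0 * u + y0 * v) * (sin w)\<^sup>2 / w
        + (u\<^sup>2 + v\<^sup>2) * (w - sin w * cos w) / (2 * w\<^sup>2)))"

lemma Exp_map_eq_closed_form:
  "snd (snd p) \<noteq> 0 \<Longrightarrow> Exp_map (x0, y0, z0) p = Exp_closed_form x0 y0 z0 p"
  by (cases p) (simp add: Exp_map_explicit Exp_closed_form_def planar_pos_def vertical_pos_def)

lemma Exp_closed_form_differentiable:
  assumes "snd (snd p) \<noteq> 0"
  shows "\<exists>D. (Exp_closed_form x0 y0 z0 has_derivative D) (at p)"
  unfolding Exp_closed_form_def [abs_def] Let_def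
  by (rule exI, (rule derivative_intros | simp add: assms)+)

lemma Exp_map_has_derivative_iff_closed_form:
  assumes "snd (snd p) \<noteq> 0"
  shows "(Exp_map (x0, y0, z0) has_derivative D) (at p) \<longleftrightarrow>
    (Exp_closed_form x0 y0 z0 has_derivative D) (at p)"
proof -
  have "open {p :: real \<times> real \<times> real. snd (snd p) \<noteq> 0}"
    by (intro open_Collect_neq continuous_intros)
  then show ?thesis
    using assms Exp_map_eq_closed_form
    by (intro iffI; elim has_derivative_transform_within_open) auto
qed

lemma Exp_closed_form_jacobian:
  assumes w: "w \<noteq> 0" and D: "(Exp_closed_form x0 y0 z0 has_derivative D) (at (u, v, w))"
  shows "D (1, 0, 0) = (sin w / w, 0, x0 * (sin w)\<^sup>2 / w + u * (w - sin w * cos w) / w\<^sup>2)"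
    and "D (0, 1, 0) = (0, sin w / w, y0 * (sin w)\<^sup>2 / w + v * (w - sin w * cos w) / w\<^sup>2)"
    and "D (0, 0, 1) =
      (- x0 * sin w - u * (sin w - w * cos w) / w\<^sup>2, - y0 * sin w - v * (sin w - w * cos w) / w\<^sup>2,
       (x0\<^sup>2 + y0\<^sup>2) * (cos w)\<^sup>2 + (x0 * u + y0 * v) * (2 * w * sin w * cos w - (sin w)\<^sup>2) / w\<^sup>2
        + (u\<^sup>2 + v\<^sup>2) * cos w * (sin w - w * cos w) / w ^ 3)"
proof -
  show "D (1, 0, 0) = (sin w / w, 0, x0 * (sin w)\<^sup>2 / w + u * (w - sin w * cos w) / w\<^sup>2)"
    by (rule has_derivative_directional_triple[OF D])
      (use w in \<open>auto simp: Exp_closed_form_def field_simps power2_eq_square intro!: derivative_eq_intros\<close>)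
  show "D (0, 1, 0) = (0, sin w / w, y0 * (sin w)\<^sup>2 / w + v * (w - sin w * cos w) / w\<^sup>2)"
    by (rule has_derivative_directional_triple[OF D])
      (use w in \<open>auto simp: Exp_closed_form_def field_simps power2_eq_square intro!: derivative_eq_intros\<close>)
  show "D (0, 0, 1) =
      (- x0 * sin w - u * (sin w - w * cos w) / w\<^sup>2, - y0 * sin w - v * (sin w - w * cos w) / w\<^sup>2,
       (x0\<^sup>2 + y0\<^sup>2) * (cos w)\<^sup>2 + (x0 * u + y0 * v) * (2 * w * sin w * cos w - (sin w)\<^sup>2) / w\<^sup>2
        + (u\<^sup>2 + v\<^sup>2) * cos w * (sin w - w * cos w) / w ^ 3)"
    using w by (intro has_derivative_directional_triple[OF D])
      (auto simp: Exp_closed_form_def Let_def field_simps power2_eq_square power3_eq_cube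
        intro!: derivative_eq_intros, use sin_cos_squared_add3[of w] in algebra)
qed

lemma Exp_map_critical_point_if_sin_eq_0:
  assumes "w \<noteq> 0" "sin w = 0"
  shows "critical_point (Exp_map (x0, y0, z0)) (u, v, w)"
proof -
  obtain D where D: "(Exp_closed_form x0 y0 z0 has_derivative D) (at (u, v, w))"
    using Exp_closed_form_differentiable[of "(u, v, w)" x0 y0 z0] assms(1) by auto
  have "\<not> surj D"
    using Exp_closed_form_jacobian[OF assms(1) D] assms(2)
    by (intro not_surj_linear_triple[OF has_derivative_linear[OF D]]) simp_all
  then show ?thesis
    using D assms(1) Exp_map_has_derivative_iff_closed_form unfolding critical_point_def by auto
qed

lemma Exp_map_not_critical_point_nonzero:
  assumes "0 < x0\<^sup>2 + y0\<^sup>2" "w \<noteq> 0" "\<bar>w\<bar> < pi"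
  shows "\<not> critical_point (Exp_map (x0, y0, z0)) (u, v, w)"
proof
  assume "critical_point (Exp_map (x0, y0, z0)) (u, v, w)"
  then obtain D where D: "(Exp_closed_form x0 y0 z0 has_derivative D) (at (u, v, w))" "\<not> surj D"
    using Exp_map_has_derivative_iff_closed_form assms(2) unfolding critical_point_def by auto
  define s r where "s = sin w / w" and "r = (sin w - w * cos w) / w ^ 3"
  have sr: "0 < s" "s < 4 * r"
    unfolding s_def r_def using sinc_bounds[OF assms(2,3)] by auto
  have minor:
    "s * ((x0\<^sup>2 + y0\<^sup>2) * (cos w)\<^sup>2 + (x0 * u + y0 * v) * (2 * w * sin w * cos w - (sin w)\<^sup>2) / w\<^sup>2
        + (u\<^sup>2 + v\<^sup>2) * cos w * (sin w - w * cos w) / w ^ 3)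
     - (- x0 * sin w - u * (sin w - w * cos w) / w\<^sup>2) * (x0 * (sin w)\<^sup>2 / w + u * (w - sin w * cos w) / w\<^sup>2)
     - (- y0 * sin w - v * (sin w - w * cos w) / w\<^sup>2) * (y0 * (sin w)\<^sup>2 / w + v * (w - sin w * cos w) / w\<^sup>2)
     = s * (x0\<^sup>2 + y0\<^sup>2) + s * (x0 * u + y0 * v) + r * (u\<^sup>2 + v\<^sup>2)"
    unfolding s_def r_def using assms(2)
    by (simp add: field_simps power2_eq_square power3_eq_cube) (use sin_cos_squared_add3[of w] in algebra)
  have "(x0 * u + y0 * v)\<^sup>2 \<le> (x0\<^sup>2 + y0\<^sup>2) * (u\<^sup>2 + v\<^sup>2)"
    using Cauchy_Schwarz_ineq[of "(x0, y0)" "(u, v)"] by (simp add: power2_eq_square)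
  then have "0 < s * (x0\<^sup>2 + y0\<^sup>2) + s * (x0 * u + y0 * v) + r * (u\<^sup>2 + v\<^sup>2)"
    using assms(1) sr by (intro quadratic_form_pos) auto
  then have "surj D"
    using Exp_closed_form_jacobian[OF assms(2) D(1)] sr minor unfolding s_def
    by (intro surj_linear_triple[OF has_derivative_linear[OF D(1)]]) auto
  with D(2) show False ..
qed

lemma has_real_derivative_vertical_pos_frequency_0:
  "((\<lambda>w. vertical_pos x0 y0 z0 u v w 1) has_real_derivative
     (x0\<^sup>2 + y0\<^sup>2) + (x0 * u + y0 * v) + (u\<^sup>2 + v\<^sup>2) / 3) (at 0)"
proof -
  have "((\<lambda>w. (x0\<^sup>2 + y0\<^sup>2) * ((w + sin w * cos w) / (2 * w)) + (x0 * u + y0 * v) * ((sin w)\<^sup>2 / w\<^sup>2)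
      + (u\<^sup>2 + v\<^sup>2) * ((w - sin w * cos w) / (2 * w ^ 3)))
      \<longlongrightarrow> (x0\<^sup>2 + y0\<^sup>2) + (x0 * u + y0 * v) + (u\<^sup>2 + v\<^sup>2) / 3) (at 0)"
    by real_asymp
  then show ?thesis
    unfolding DERIV_def
    by (rule Lim_transform_eventually)
      (auto simp: eventually_at_filter vertical_pos_def field_simps power2_eq_square power3_eq_cube)
qed

lemma Exp_map_not_critical_point_zero:
  assumes "0 < x0\<^sup>2 + y0\<^sup>2"
  shows "\<not> critical_point (Exp_map (x0, y0, z0)) (u, v, 0)"
proof
  assume "critical_point (Exp_map (x0, y0, z0)) (u, v, 0)"
  then obtain D where D: "(Exp_map (x0, y0, z0) has_derivative D) (at (u, v, 0))" "\<not> surj D"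
    unfolding critical_point_def by blast
  have Du: "D (1, 0, 0) = (1, 0, 0)" and Dv: "D (0, 1, 0) = (0, 1, 0)"
    by (rule has_derivative_directional_triple[OF D(1)];
        auto simp: Exp_map_explicit planar_pos_def vertical_pos_def intro!: derivative_eq_intros)+
  obtain a b zw where Dw: "D (0, 0, 1) = (a, b, zw)"
    by (cases "D (0, 0, 1)")
  have "((\<lambda>h. snd (snd (Exp_map (x0, y0, z0) ((u, v, 0) + h *\<^sub>R (0, 0, 1))))) has_real_derivative
      (x0\<^sup>2 + y0\<^sup>2) + (x0 * u + y0 * v) + (u\<^sup>2 + v\<^sup>2) / 3) (at 0)"
    using has_real_derivative_vertical_pos_frequency_0 by (simp add: Exp_map_explicit)
  then have "zw = (x0\<^sup>2 + y0\<^sup>2) + (x0 * u + y0 * v) + (u\<^sup>2 + v\<^sup>2) / 3"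
    using has_derivative_component_directional[OF D(1)
        bounded_linear_compose[OF bounded_linear_snd bounded_linear_snd]] Dw
    by fastforce
  moreover have "(x0 * u + y0 * v)\<^sup>2 \<le> (x0\<^sup>2 + y0\<^sup>2) * (u\<^sup>2 + v\<^sup>2)"
    using Cauchy_Schwarz_ineq[of "(x0, y0)" "(u, v)"] by (simp add: power2_eq_square)
  ultimately have "0 < zw"
    using quadratic_form_pos[of "x0\<^sup>2 + y0\<^sup>2" "u\<^sup>2 + v\<^sup>2" "x0 * u + y0 * v" 1 "1 / 3"] assms
    by simp
  then have "surj D"
    by (intro surj_linear_triple[OF has_derivative_linear[OF D(1)] Du Dv Dw]) simp_all
  with D(2) show False ..
qed

lemma Exp_map_critical_point_iff:
  assumes "0 < x0\<^sup>2 + y0\<^sup>2" "\<bar>w\<bar> \<le> pi"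
  shows "critical_point (Exp_map (x0, y0, z0)) (u, v, w) \<longleftrightarrow> \<bar>w\<bar> = pi"
proof (cases "w = 0 \<or> \<bar>w\<bar> < pi")
  case True
  then have "\<not> critical_point (Exp_map (x0, y0, z0)) (u, v, w)"
    using Exp_map_not_critical_point_zero[OF assms(1)] Exp_map_not_critical_point_nonzero[OF assms(1)]
    by (cases "w = 0") auto
  moreover have "\<bar>w\<bar> \<noteq> pi"
    using True by auto
  ultimately show ?thesis
    by simp
next
  case False
  then have "w = pi \<or> w = - pi"
    using assms(2) by linarith
  then have "\<bar>w\<bar> = pi" "w \<noteq> 0" "sin w = 0"
    by auto
  then show ?thesis
    using Exp_map_critical_point_if_sin_eq_0 by blast
qed

theorem theorem13:
  fixes x0 y0 z0 u0 v0 w0 :: real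
  assumes "x0\<^sup>2 + y0\<^sup>2 \<noteq> 0"
    and "u0\<^sup>2 + v0\<^sup>2 + (x0\<^sup>2 + y0\<^sup>2) * w0\<^sup>2 = 1"
  shows "t_con (x0, y0, z0) (u0, v0, w0) = (if w0 = 0 then \<infinity> else ereal (pi / \<bar>w0\<bar>))"
proof -
  have "0 < x0\<^sup>2 + y0\<^sup>2"
    using assms(1) sum_power2_ge_zero[of x0 y0] by linarith
  define S where "S = {t. 0 < t \<and> critical_point (Exp_map (x0, y0, z0)) (t *\<^sub>R (u0, v0, w0))}"
  have t_con_S: "t_con (x0, y0, z0) (u0, v0, w0) = Inf (ereal ` S)"
    unfolding t_con_def S_def ..
  have S_iff: "t \<in> S \<longleftrightarrow> t * \<bar>w0\<bar> = pi" if "0 < t" "t * \<bar>w0\<bar> \<le> pi" for t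
    using Exp_map_critical_point_iff[OF \<open>0 < x0\<^sup>2 + y0\<^sup>2\<close>, of "t * w0"] that
    by (simp add: S_def abs_mult)
  show ?thesis
  proof (cases "w0 = 0")
    case True
    then have "S = {}"
      using S_iff by (auto simp: S_def)
    then show ?thesis
      using True t_con_S by (simp add: top_ereal_def)
  next
    case False
    have "pi / \<bar>w0\<bar> \<in> S"
      using False S_iff[of "pi / \<bar>w0\<bar>"] by simp
    moreover have "pi / \<bar>w0\<bar> \<le> t" if "t \<in> S" for t
      using that S_iff[of t] False by (force simp: S_def field_simps)
    ultimately have "Inf (ereal ` S) = ereal (pi / \<bar>w0\<bar>)"
      by (intro cInf_eq_minimum) auto
    then show ?thesis
      using False t_con_S by simp
  qed
qed

end
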